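(* Let $k\ge1$ and assume that $R_0,\dots,R_k$ (from BCG) have full column rank. Run DR-BCG with the same $A,B,X_0$ (with any choice of the QR factorizations). Then DR-BCG is well defined up to index $k$ (all $S_{j}^TAS_{j}$, $j\le k-1$, are nonsingular), all $\widehat\Phi_j$ ($j\le k$) are nonsingular, and for $j=0,\dots,k$: $$\widehat X_j=X_j,\qquad R_j=Q_j\widehat\Phi_j,\qquad P_j=S_j\widehat\Phi_j,$$ and for $j=1,\dots,k$: $\Upsilon_{j-1}=\widehat\Phi_{j-1}^{-1}\widehat\Pi_{j-1}\widehat\Phi_{j-1}$ and $$\Theta_{j-1}=\widehat\Phi_{j-1}^T\,\widehat\Pi_{j-1}\,\widehat\Phi_{j-1}.$$
   Context: Let $A\in\mathbb{R}^{n\times n}$ be symmetric positive definite, let $B,X_0\in\mathbb{R}^{n\times m}$, and let $X=A^{-1}B$. The block conjugate gradient (BCG) algorithm sets $R_0=B-AX_0$, $P_0=R_0$, and for $k=1,2,\dots$: $\Upsilon_{k-1}=(P_{k-1}^TAP_{k-1})^{-1}(R_{k-1}^TR_{k-1})$, $X_k=X_{k-1}+P_{k-1}\Upsilon_{k-1}$, $R_k=R_{k-1}-AP_{k-1}\Upsilon_{k-1}$, $\Xi_k=(R_{k-1}^TR_{k-1})^{-1}(R_k^TR_k)$, $P_k=R_k+P_{k-1}\Xi_k$. Define $\mathfrak{E}_k=(X-X_k)^TA(X-X_k)$ and $\Theta_k=(R_k^TR_k)\Upsilon_k$. The Dubrulle-R BCG algorithm (DR-BCG) sets $\widehat X_0=X_0$,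 computes a QR factorization $B-AX_0=Q_0\widehat\Phi_0$ ($Q_0$ with orthonormal columns, $\widehat\Phi_0\in\mathbb{R}^{m\times m}$ upper triangular), $S_0=Q_0$, and for $k=1,2,\dots$: $\widehat\Pi_{k-1}=(S_{k-1}^TAS_{k-1})^{-1}$, $\widehat X_k=\widehat X_{k-1}+S_{k-1}\widehat\Pi_{k-1}\widehat\Phi_{k-1}$, a QR factorization $Q_{k-1}-AS_{k-1}\widehat\Pi_{k-1}=Q_k\widehat\Psi_k$, $S_k=Q_k+S_{k-1}\widehat\Psi_k^T$, and $\widehat\Phi_k=\widehat\Psi_k\widehat\Phi_{k-1}$. *)

theory Defs
  imports "HOL-Analysis.Analysis"
begin

text \<open>Matrices are HOL-Analysis typed matrices: an n-by-m real matrix has type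
  real^('m::{finite,wellorder})^'n (rows indexed by 'n, columns by 'm).\<close>

definition sym_pos_def_mat :: "real^'n^'n \<Rightarrow> bool" where
  "sym_pos_def_mat A \<longleftrightarrow> transpose A = A \<and> (\<forall>x. x \<noteq> 0 \<longrightarrow> x \<bullet> (A *v x) > 0)"

definition upper_triangular_mat :: "real^('m::{finite,wellorder})^('m::{finite,wellorder}) \<Rightarrow> bool" where
  "upper_triangular_mat M \<longleftrightarrow> (\<forall>i j. j < i \<longrightarrow> M $ i $ j = 0)"

definition orthonormal_cols :: "real^('m::{finite,wellorder})^'n \<Rightarrow> bool" where
  "orthonormal_cols Q \<longleftrightarrow> transpose Q ** Q = mat 1"

definition is_QR :: "real^('m::{finite,wellorder})^'n \<Rightarrow> real^('m::{finite,wellorder})^'n \<Rightarrow> real^('m::{finite,wellorder})^('m::{finite,wellorder}) \<Rightarrow> bool" where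
  "is_QR M Q R \<longleftrightarrow> orthonormal_cols Q \<and> upper_triangular_mat R \<and> M = Q ** R"

definition bcg_Upsilon :: "real^'n^'n \<Rightarrow> real^('m::{finite,wellorder})^'n \<Rightarrow> real^('m::{finite,wellorder})^'n \<Rightarrow> real^('m::{finite,wellorder})^('m::{finite,wellorder})" where
  "bcg_Upsilon A R P = matrix_inv (transpose P ** A ** P) ** (transpose R ** R)"

definition bcg_step :: "real^'n^'n \<Rightarrow> (real^('m::{finite,wellorder})^'n) \<times> (real^('m::{finite,wellorder})^'n) \<times> (real^('m::{finite,wellorder})^'n)
    \<Rightarrow> (real^('m::{finite,wellorder})^'n) \<times> (real^('m::{finite,wellorder})^'n) \<times> (real^('m::{finite,wellorder})^'n)" where
  "bcg_step A st = (case st of (X, R, P) \<Rightarrow>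
     (let U = bcg_Upsilon A R P;
          X' = X + P ** U;
          R' = R - A ** P ** U;
          Xi = matrix_inv (transpose R ** R) ** (transpose R' ** R');
          P' = R' + P ** Xi
      in (X', R', P')))"

primrec bcg :: "real^'n^'n \<Rightarrow> real^('m::{finite,wellorder})^'n \<Rightarrow> real^('m::{finite,wellorder})^'n \<Rightarrow> nat
    \<Rightarrow> (real^('m::{finite,wellorder})^'n) \<times> (real^('m::{finite,wellorder})^'n) \<times> (real^('m::{finite,wellorder})^'n)" where
  "bcg A B X0 0 = (X0, B - A ** X0, B - A ** X0)"
| "bcg A B X0 (Suc k) = bcg_step A (bcg A B X0 k)"

definition bcg_X :: "real^'n^'n \<Rightarrow> real^('m::{finite,wellorder})^'n \<Rightarrow> real^('m::{finite,wellorder})^'n \<Rightarrow> nat \<Rightarrow> real^('m::{finite,wellorder})^'n" where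
  "bcg_X A B X0 k = fst (bcg A B X0 k)"
definition bcg_R :: "real^'n^'n \<Rightarrow> real^('m::{finite,wellorder})^'n \<Rightarrow> real^('m::{finite,wellorder})^'n \<Rightarrow> nat \<Rightarrow> real^('m::{finite,wellorder})^'n" where
  "bcg_R A B X0 k = fst (snd (bcg A B X0 k))"
definition bcg_P :: "real^'n^'n \<Rightarrow> real^('m::{finite,wellorder})^'n \<Rightarrow> real^('m::{finite,wellorder})^'n \<Rightarrow> nat \<Rightarrow> real^('m::{finite,wellorder})^'n" where
  "bcg_P A B X0 k = snd (snd (bcg A B X0 k))"

definition bcg_Ups :: "real^'n^'n \<Rightarrow> real^('m::{finite,wellorder})^'n \<Rightarrow> real^('m::{finite,wellorder})^'n \<Rightarrow> nat \<Rightarrow> real^('m::{finite,wellorder})^('m::{finite,wellorder})" where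
  "bcg_Ups A B X0 k = bcg_Upsilon A (bcg_R A B X0 k) (bcg_P A B X0 k)"
definition bcg_Theta :: "real^'n^'n \<Rightarrow> real^('m::{finite,wellorder})^'n \<Rightarrow> real^('m::{finite,wellorder})^'n \<Rightarrow> nat \<Rightarrow> real^('m::{finite,wellorder})^('m::{finite,wellorder})" where
  "bcg_Theta A B X0 k = (transpose (bcg_R A B X0 k) ** bcg_R A B X0 k) ** bcg_Ups A B X0 k"

text \<open>A run of DR-BCG up to index k (steps 1..k), with arbitrary admissible choices
  of the QR factorizations.  Here PiH j = \<PiH>hat_j and Psi j = \<Psi>hat_j.\<close>
definition drbcg_run ::
  "real^'n^'n \<Rightarrow> real^('m::{finite,wellorder})^'n \<Rightarrow> real^('m::{finite,wellorder})^'n \<Rightarrow> nat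
   \<Rightarrow> (nat \<Rightarrow> real^('m::{finite,wellorder})^'n) \<Rightarrow> (nat \<Rightarrow> real^('m::{finite,wellorder})^'n) \<Rightarrow> (nat \<Rightarrow> real^('m::{finite,wellorder})^'n)
   \<Rightarrow> (nat \<Rightarrow> real^('m::{finite,wellorder})^('m::{finite,wellorder})) \<Rightarrow> (nat \<Rightarrow> real^('m::{finite,wellorder})^('m::{finite,wellorder})) \<Rightarrow> (nat \<Rightarrow> real^('m::{finite,wellorder})^('m::{finite,wellorder})) \<Rightarrow> bool" where
  "drbcg_run A B X0 k Xh Q S Phi Psi PiH \<longleftrightarrow>
     Xh 0 = X0 \<and> is_QR (B - A ** X0) (Q 0) (Phi 0) \<and> S 0 = Q 0 \<and>
     (\<forall>j < k.
        PiH j = matrix_inv (transpose (S j) ** A ** S j) \<and>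
        Xh (Suc j) = Xh j + S j ** PiH j ** Phi j \<and>
        is_QR (Q j - A ** S j ** PiH j) (Q (Suc j)) (Psi (Suc j)) \<and>
        S (Suc j) = Q (Suc j) + S j ** transpose (Psi (Suc j)) \<and>
        Phi (Suc j) = Psi (Suc j) ** Phi j)"

end

theory Submission
  imports Defs
begin

(* Induction on j with the invariant  Xh_j = X_j, R_j = Q_j Phi_j, P_j = S_j Phi_j, Phi_j invertible.
   Given it, S_j = P_j Phi_j^-1, so S_j^T A S_j is congruent to the BCG Gram matrix P_j^T A P_j and
   Pi_j = Phi_j (P_j^T A P_j)^-1 Phi_j^T; hence Upsilon_j = Phi_j^-1 Pi_j Phi_j and
   P_j Upsilon_j = S_j Pi_j Phi_j.  Substituting into the BCG recurrences gives
   R_(j+1) = (Q_j - A S_j Pi_j) Phi_j = Q_(j+1) Phi_(j+1) and, because R^T R = Phi^T Phi for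
   orthonormal Q, also P_(j+1) = S_(j+1) Phi_(j+1); full column rank of R_(j+1) makes Phi_(j+1)
   invertible.  The Gram matrices P_j^T A P_j are invertible thanks to the BCG identity
   P_j^T R_j = R_j^T R_j, which forces P_j to have full column rank. *)

lemma matrix_add_rdistrib: "((A::'a::semiring_1^'p^'n) + B) ** (C::'a^'q^'p) = A ** C + B ** C"
  by (simp add: matrix_matrix_mult_def vec_eq_iff sum.distrib distrib_right)

lemma matrix_diff_rdistrib: "((A::'a::ring_1^'p^'n) - B) ** (C::'a^'q^'p) = A ** C - B ** C"
  by (simp add: matrix_matrix_mult_def vec_eq_iff sum_subtractf left_diff_distrib)

lemma matrix_diff_ldistrib: "(C::'a::ring_1^'p^'n) ** ((A::'a^'q^'p) - B) = C ** A - C ** B"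
  by (simp add: matrix_matrix_mult_def vec_eq_iff sum_subtractf right_diff_distrib)

lemma transpose_add: "transpose ((A::'a::semiring_1^'p^'n) + B) = transpose A + transpose B"
  by (simp add: transpose_def vec_eq_iff)

lemma matrix_mul_cancel_left: "(M::'a::semiring_1^'m^'n) ** N = mat 1 \<Longrightarrow> M ** (N ** X) = X"
  by (simp add: matrix_mul_assoc)

lemma transpose_inverse:
  fixes M N :: "'a::comm_semiring_1^'n^'n"
  shows "M ** N = mat 1 \<Longrightarrow> transpose N ** transpose M = mat 1"
  by (metis matrix_transpose_mul transpose_mat)

lemma matrix_inv_right_left:
  fixes M :: "'a::semiring_1^'n^'m"
  assumes "invertible M"
  shows matrix_inv_right: "M ** matrix_inv M = mat 1"
    and matrix_inv_left: "matrix_inv M ** M = mat 1"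
proof -
  have "M ** matrix_inv M = mat 1 \<and> matrix_inv M ** M = mat 1"
    unfolding matrix_inv_def by (rule someI_ex) (use assms in \<open>simp add: invertible_def\<close>)
  then show "M ** matrix_inv M = mat 1" "matrix_inv M ** M = mat 1" by auto
qed

lemma matrix_inv_unique:
  fixes M X :: "'a::field^'n^'n"
  assumes "M ** X = mat 1"
  shows "matrix_inv M = X"
proof -
  have "invertible M" using assms invertible_right_inverse by blast
  then have "X ** (M ** matrix_inv M) = X" by (simp add: matrix_inv_right)
  then show ?thesis
    using assms matrix_left_right_inverse by (metis matrix_mul_assoc matrix_mul_lid)
qed

lemma matrix_inv_mult:
  fixes M N :: "'a::field^'n^'n"
  assumes "invertible M" "invertible N"
  shows "matrix_inv (M ** N) = matrix_inv N ** matrix_inv M"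
proof (rule matrix_inv_unique)
  have "M ** N ** (matrix_inv N ** matrix_inv M) = M ** (N ** matrix_inv N) ** matrix_inv M"
    by (simp add: matrix_mul_assoc)
  then show "M ** N ** (matrix_inv N ** matrix_inv M) = mat 1"
    using assms by (simp add: matrix_inv_right)
qed

lemma matrix_inv_transpose:
  fixes M :: "'a::field^'n^'n"
  assumes "invertible M"
  shows "matrix_inv (transpose M) = transpose (matrix_inv M)"
  by (rule matrix_inv_unique) (rule transpose_inverse[OF matrix_inv_left[OF assms]])

lemma invertible_iff_full_rank:
  fixes M :: "real^'n^'n"
  shows "invertible M \<longleftrightarrow> rank M = CARD('n)"
  by (metis full_rank_injective invertible_left_inverse matrix_left_invertible_injective)

lemma invertible_if_full_rank_mult:
  fixes Q :: "real^'m^'n" and M :: "real^'m^'m"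
  assumes "rank (Q ** M) = CARD('m)"
  shows "invertible M"
  using assms rank_mul_le_right[of Q M] rank_bound[of M]
  by (simp add: invertible_iff_full_rank)

lemma full_rank_if_invertible_transpose_mult:
  fixes P R :: "real^'m^'n"
  assumes "invertible (transpose P ** R)"
  shows "rank P = CARD('m)"
  using assms rank_mul_le_left[of "transpose P" R] rank_transpose[of P] rank_bound[of P]
  by (simp add: invertible_iff_full_rank)

lemma invertible_transpose_mult_pos_def:
  fixes A :: "real^'n^'n" and P :: "real^'m^'n"
  assumes pos: "\<forall>x. x \<noteq> 0 \<longrightarrow> 0 < x \<bullet> (A *v x)" and rank: "rank P = CARD('m)"
  shows "invertible (transpose P ** A ** P)"
proof -
  have "x = 0" if x: "(transpose P ** A ** P) *v x = 0" for x
  proof (rule ccontr)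
    assume "x \<noteq> 0"
    then have "P *v x \<noteq> 0"
      using rank by (metis full_rank_injective inj_eq matrix_vector_mult_0_right)
    moreover have "(P *v x) \<bullet> (A *v (P *v x)) = x \<bullet> ((transpose P ** A ** P) *v x)"
      by (metis dot_lmul_matrix inner_commute matrix_vector_mul_assoc transpose_matrix_vector)
    ultimately show False using pos x by fastforce
  qed
  then show ?thesis
    by (metis invertible_iff_full_rank matrix_nonfull_linear_equations_eq)
qed

lemma invertible_gram:
  fixes R :: "real^'m^'n"
  assumes "rank R = CARD('m)"
  shows "invertible (transpose R ** R)"
  using invertible_transpose_mult_pos_def[of "mat 1" R] assms by simp

lemma gram_orthonormal_mult:
  fixes Q :: "real^'m^'n" and F :: "real^'p^'m"
  assumes "transpose Q ** Q = mat 1"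
  shows "transpose (Q ** F) ** (Q ** F) = transpose F ** F"
  by (metis assms matrix_mul_assoc matrix_mul_lid matrix_transpose_mul)

lemma matrix_inv_congruence:
  fixes S :: "real^'m^'n" and M :: "real^'n^'n" and Phi :: "real^'m^'m"
  assumes Phi: "invertible Phi" and K: "invertible (transpose (S ** Phi) ** M ** (S ** Phi))"
  shows "invertible (transpose S ** M ** S)"
    and "matrix_inv (transpose S ** M ** S)
           = Phi ** matrix_inv (transpose (S ** Phi) ** M ** (S ** Phi)) ** transpose Phi"
proof -
  define H where "H = matrix_inv (transpose (S ** Phi) ** M ** (S ** Phi))"
  have "transpose Phi ** (transpose S ** M ** S ** Phi ** H) = mat 1"
    using matrix_inv_right[OF K] by (simp add: H_def matrix_transpose_mul matrix_mul_assoc)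
  then have "transpose S ** M ** S ** Phi ** H = transpose (matrix_inv Phi)"
    by (metis matrix_inv_transpose[OF Phi] matrix_inv_unique)
  then have right_inv: "transpose S ** M ** S ** (Phi ** H ** transpose Phi) = mat 1"
    by (metis Phi matrix_inv_right matrix_mul_assoc matrix_transpose_mul transpose_mat)
  then show "invertible (transpose S ** M ** S)"
    using invertible_right_inverse by blast
  show "matrix_inv (transpose S ** M ** S) = Phi ** H ** transpose Phi"
    using right_inv by (rule matrix_inv_unique)
qed

lemma bcg_0:
  "bcg_X A B X0 0 = X0" "bcg_R A B X0 0 = B - A ** X0" "bcg_P A B X0 0 = bcg_R A B X0 0"
  by (simp_all add: bcg_X_def bcg_R_def bcg_P_def)

lemma bcg_Suc:
  "bcg_X A B X0 (Suc j) = bcg_X A B X0 j + bcg_P A B X0 j ** bcg_Ups A B X0 j"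
  "bcg_R A B X0 (Suc j) = bcg_R A B X0 j - A ** bcg_P A B X0 j ** bcg_Ups A B X0 j"
  "bcg_P A B X0 (Suc j) = bcg_R A B X0 (Suc j) + bcg_P A B X0 j **
      (matrix_inv (transpose (bcg_R A B X0 j) ** bcg_R A B X0 j)
        ** (transpose (bcg_R A B X0 (Suc j)) ** bcg_R A B X0 (Suc j)))"
  by (simp_all add: bcg_X_def bcg_R_def bcg_P_def bcg_Ups_def bcg_step_def Let_def split: prod.splits)

lemma sym_pos_def_mat_pos:
  "sym_pos_def_mat A \<Longrightarrow> \<forall>x. x \<noteq> 0 \<longrightarrow> 0 < x \<bullet> (A *v x)"
  by (simp add: sym_pos_def_mat_def)

lemma invertible_bcg_gram:
  fixes A :: "real^'n^'n" and R P :: "real^'m^'n"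
  assumes pos: "\<forall>x. x \<noteq> 0 \<longrightarrow> 0 < x \<bullet> (A *v x)"
    and rank: "rank R = CARD('m)" and PR: "transpose P ** R = transpose R ** R"
  shows "invertible (transpose P ** A ** P)"
proof -
  have "invertible (transpose P ** R)"
    using PR invertible_gram[OF rank] by simp
  then show ?thesis
    using invertible_transpose_mult_pos_def[OF pos] full_rank_if_invertible_transpose_mult by blast
qed

lemma bcg_residual_orthogonal:
  fixes A :: "real^'n^'n" and R P :: "real^('m::{finite,wellorder})^'n"
  assumes G: "invertible (transpose P ** A ** P)" and PR: "transpose P ** R = transpose R ** R"
  shows "transpose P ** (R - A ** P ** bcg_Upsilon A R P) = 0"
proof -
  have "transpose P ** (R - A ** P ** bcg_Upsilon A R P)
      = transpose R ** R - (transpose P ** A ** P) ** matrix_inv (transpose P ** A ** P) ** (transpose R ** R)"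
    by (simp only: PR bcg_Upsilon_def matrix_diff_ldistrib matrix_mul_assoc)
  then show ?thesis by (simp add: matrix_inv_right[OF G])
qed

lemma bcg_P_transpose_R:
  fixes A :: "real^'n^'n" and B X0 :: "real^('m::{finite,wellorder})^'n"
  assumes pos: "\<forall>x. x \<noteq> 0 \<longrightarrow> 0 < x \<bullet> (A *v x)"
    and rank: "\<forall>i \<le> j. rank (bcg_R A B X0 i) = CARD('m)"
  shows "transpose (bcg_P A B X0 j) ** bcg_R A B X0 j = transpose (bcg_R A B X0 j) ** bcg_R A B X0 j"
  using rank
proof (induction j)
  case 0
  then show ?case by (simp add: bcg_0)
next
  case (Suc j)
  let ?R = "bcg_R A B X0" and ?P = "bcg_P A B X0"
  have "rank (?R j) = CARD('m)" "transpose (?P j) ** ?R j = transpose (?R j) ** ?R j"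
    using Suc by auto
  then have "transpose (?P j) ** ?R (Suc j) = 0"
    unfolding bcg_Suc(2) bcg_Ups_def
    by (intro bcg_residual_orthogonal invertible_bcg_gram[OF pos])
  moreover have "transpose (?P (Suc j)) ** ?R (Suc j)
      = transpose (?R (Suc j)) ** ?R (Suc j)
        + transpose (matrix_inv (transpose (?R j) ** ?R j) ** (transpose (?R (Suc j)) ** ?R (Suc j)))
          ** (transpose (?P j) ** ?R (Suc j))"
    by (simp only: bcg_Suc(3)[of A B X0 j] transpose_add matrix_add_rdistrib matrix_transpose_mul
        matrix_mul_assoc)
  ultimately show ?case by simp
qed

lemma bcg_gram_invertible:
  fixes A :: "real^'n^'n" and B X0 :: "real^('m::{finite,wellorder})^'n"
  assumes "\<forall>x. x \<noteq> 0 \<longrightarrow> 0 < x \<bullet> (A *v x)"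
    and "\<forall>i \<le> j. rank (bcg_R A B X0 i) = CARD('m)"
  shows "invertible (transpose (bcg_P A B X0 j) ** A ** bcg_P A B X0 j)"
  using assms invertible_bcg_gram bcg_P_transpose_R by blast

lemma bcg_Upsilon_congruence:
  fixes A :: "real^'n^'n" and Q S :: "real^('m::{finite,wellorder})^'n"
    and Phi :: "real^('m::{finite,wellorder})^('m::{finite,wellorder})"
  assumes Q: "transpose Q ** Q = mat 1" and Phi: "invertible Phi"
    and G: "invertible (transpose (S ** Phi) ** A ** (S ** Phi))"
  shows "bcg_Upsilon A (Q ** Phi) (S ** Phi)
           = matrix_inv Phi ** matrix_inv (transpose S ** A ** S) ** Phi"
proof -
  define Gi where "Gi = matrix_inv (transpose (S ** Phi) ** A ** (S ** Phi))"
  have "matrix_inv Phi ** matrix_inv (transpose S ** A ** S) ** Phi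
      = matrix_inv Phi ** Phi ** Gi ** transpose Phi ** Phi"
    by (simp add: matrix_inv_congruence(2)[OF Phi G] Gi_def matrix_mul_assoc)
  also have "\<dots> = Gi ** (transpose Phi ** Phi)"
    by (simp add: matrix_inv_left[OF Phi] matrix_mul_assoc)
  finally show ?thesis
    by (simp add: bcg_Upsilon_def gram_orthonormal_mult[OF Q] Gi_def)
qed

lemma bcg_direction_congruence:
  fixes Q Q' S :: "real^'m^'n" and Phi Psi :: "real^'m^'m"
  assumes Q: "transpose Q ** Q = mat 1" and Q': "transpose Q' ** Q' = mat 1"
    and Phi: "invertible Phi"
  shows "Q' ** (Psi ** Phi) + S ** Phi ** (matrix_inv (transpose (Q ** Phi) ** (Q ** Phi))
           ** (transpose (Q' ** (Psi ** Phi)) ** (Q' ** (Psi ** Phi))))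
         = (Q' + S ** transpose Psi) ** (Psi ** Phi)"
proof -
  define Fi where "Fi = matrix_inv Phi"
  have Fi: "Phi ** Fi = mat 1" "transpose Fi ** transpose Phi = mat 1"
    using matrix_inv_right[OF Phi] transpose_inverse by (auto simp: Fi_def)
  have "matrix_inv (transpose Phi ** Phi) = Fi ** transpose Fi"
    by (simp add: Fi_def Phi matrix_inv_mult matrix_inv_transpose transpose_invertible)
  then have "S ** Phi ** (matrix_inv (transpose (Q ** Phi) ** (Q ** Phi))
           ** (transpose (Q' ** (Psi ** Phi)) ** (Q' ** (Psi ** Phi))))
      = S ** (Phi ** (Fi ** (transpose Fi ** (transpose Phi ** (transpose Psi ** (Psi ** Phi))))))"
    unfolding gram_orthonormal_mult[OF Q] gram_orthonormal_mult[OF Q']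
    by (simp add: matrix_transpose_mul flip: matrix_mul_assoc)
  also have "\<dots> = S ** transpose Psi ** (Psi ** Phi)"
    by (simp add: matrix_mul_cancel_left[OF Fi(1)] matrix_mul_cancel_left[OF Fi(2)]
        flip: matrix_mul_assoc)
  finally show ?thesis by (simp add: matrix_add_rdistrib)
qed

definition drbcg_agrees_with_bcg ::
  "real^'n^'n \<Rightarrow> real^('m::{finite,wellorder})^'n \<Rightarrow> real^('m::{finite,wellorder})^'n
   \<Rightarrow> (nat \<Rightarrow> real^('m::{finite,wellorder})^'n) \<Rightarrow> (nat \<Rightarrow> real^('m::{finite,wellorder})^'n)
   \<Rightarrow> (nat \<Rightarrow> real^('m::{finite,wellorder})^'n)
   \<Rightarrow> (nat \<Rightarrow> real^('m::{finite,wellorder})^('m::{finite,wellorder})) \<Rightarrow> nat \<Rightarrow> bool" where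
  "drbcg_agrees_with_bcg A B X0 Xh Q S Phi j \<longleftrightarrow>
     Xh j = bcg_X A B X0 j \<and> bcg_R A B X0 j = Q j ** Phi j \<and> bcg_P A B X0 j = S j ** Phi j
     \<and> invertible (Phi j)"

lemma drbcg_run_Q_orthonormal:
  fixes A :: "real^'n^'n" and B X0 :: "real^('m::{finite,wellorder})^'n"
    and Xh Q S :: "nat \<Rightarrow> real^('m::{finite,wellorder})^'n"
    and Phi Psi PiH :: "nat \<Rightarrow> real^('m::{finite,wellorder})^('m::{finite,wellorder})"
  assumes run: "drbcg_run A B X0 k Xh Q S Phi Psi PiH" and "j \<le> k"
  shows "transpose (Q j) ** Q j = mat 1"
proof (cases j)
  case 0
  then show ?thesis using run by (simp add: drbcg_run_def is_QR_def orthonormal_cols_def)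
next
  case (Suc i)
  then have "i < k" using \<open>j \<le> k\<close> by simp
  then show ?thesis
    using run Suc by (simp add: drbcg_run_def is_QR_def orthonormal_cols_def)
qed

lemma drbcg_agrees_0:
  fixes A :: "real^'n^'n" and B X0 :: "real^('m::{finite,wellorder})^'n"
    and Xh Q S :: "nat \<Rightarrow> real^('m::{finite,wellorder})^'n"
    and Phi Psi PiH :: "nat \<Rightarrow> real^('m::{finite,wellorder})^('m::{finite,wellorder})"
  assumes run: "drbcg_run A B X0 k Xh Q S Phi Psi PiH"
    and rank: "rank (bcg_R A B X0 0) = CARD('m)"
  shows "drbcg_agrees_with_bcg A B X0 Xh Q S Phi 0"
proof -
  have R0: "bcg_R A B X0 0 = Q 0 ** Phi 0"
    using run by (simp add: drbcg_run_def is_QR_def bcg_0)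
  then have "invertible (Phi 0)"
    using rank invertible_if_full_rank_mult[of "Q 0" "Phi 0"] by simp
  with R0 run show ?thesis
    by (simp add: drbcg_agrees_with_bcg_def drbcg_run_def bcg_0)
qed

lemma drbcg_Upsilon_Theta:
  fixes A :: "real^'n^'n" and B X0 :: "real^('m::{finite,wellorder})^'n"
    and Xh Q S :: "nat \<Rightarrow> real^('m::{finite,wellorder})^'n"
    and Phi Psi PiH :: "nat \<Rightarrow> real^('m::{finite,wellorder})^('m::{finite,wellorder})"
  assumes spd: "sym_pos_def_mat A"
    and rank: "\<forall>i \<le> j. rank (bcg_R A B X0 i) = CARD('m)"
    and run: "drbcg_run A B X0 k Xh Q S Phi Psi PiH" and "j < k"
    and agree: "drbcg_agrees_with_bcg A B X0 Xh Q S Phi j"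
  shows "invertible (transpose (S j) ** A ** S j)"
    and "bcg_Ups A B X0 j = matrix_inv (Phi j) ** PiH j ** Phi j"
    and "bcg_Theta A B X0 j = transpose (Phi j) ** PiH j ** Phi j"
    and "bcg_P A B X0 j ** bcg_Ups A B X0 j = S j ** PiH j ** Phi j"
proof -
  have R: "bcg_R A B X0 j = Q j ** Phi j" and P: "bcg_P A B X0 j = S j ** Phi j"
    and Phi: "invertible (Phi j)"
    using agree by (simp_all add: drbcg_agrees_with_bcg_def)
  have G: "invertible (transpose (S j ** Phi j) ** A ** (S j ** Phi j))"
    using bcg_gram_invertible[OF sym_pos_def_mat_pos[OF spd] rank] P by simp
  have Q: "transpose (Q j) ** Q j = mat 1"
    using drbcg_run_Q_orthonormal[OF run] \<open>j < k\<close> by simp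
  have Pi: "PiH j = matrix_inv (transpose (S j) ** A ** S j)"
    using run \<open>j < k\<close> by (simp add: drbcg_run_def)
  show "invertible (transpose (S j) ** A ** S j)"
    by (rule matrix_inv_congruence(1)[OF Phi G])
  show Ups: "bcg_Ups A B X0 j = matrix_inv (Phi j) ** PiH j ** Phi j"
    unfolding bcg_Ups_def R P Pi by (rule bcg_Upsilon_congruence[OF Q Phi G])
  show "bcg_Theta A B X0 j = transpose (Phi j) ** PiH j ** Phi j"
    unfolding bcg_Theta_def Ups R gram_orthonormal_mult[OF Q]
    by (simp add: matrix_mul_cancel_left[OF matrix_inv_right[OF Phi]] flip: matrix_mul_assoc)
  show "bcg_P A B X0 j ** bcg_Ups A B X0 j = S j ** PiH j ** Phi j"
    unfolding Ups P
    by (simp add: matrix_mul_cancel_left[OF matrix_inv_right[OF Phi]] flip: matrix_mul_assoc)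
qed

lemma drbcg_agrees_Suc:
  fixes A :: "real^'n^'n" and B X0 :: "real^('m::{finite,wellorder})^'n"
    and Xh Q S :: "nat \<Rightarrow> real^('m::{finite,wellorder})^'n"
    and Phi Psi PiH :: "nat \<Rightarrow> real^('m::{finite,wellorder})^('m::{finite,wellorder})"
  assumes spd: "sym_pos_def_mat A"
    and rank: "\<forall>i \<le> Suc j. rank (bcg_R A B X0 i) = CARD('m)"
    and run: "drbcg_run A B X0 k Xh Q S Phi Psi PiH" and "j < k"
    and agree: "drbcg_agrees_with_bcg A B X0 Xh Q S Phi j"
  shows "drbcg_agrees_with_bcg A B X0 Xh Q S Phi (Suc j)"
proof -
  have R: "bcg_R A B X0 j = Q j ** Phi j" and P: "bcg_P A B X0 j = S j ** Phi j"
    and X: "Xh j = bcg_X A B X0 j" and Phi: "invertible (Phi j)"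
    using agree by (simp_all add: drbcg_agrees_with_bcg_def)
  have PU: "bcg_P A B X0 j ** bcg_Ups A B X0 j = S j ** PiH j ** Phi j"
    using drbcg_Upsilon_Theta(4)[OF spd _ run \<open>j < k\<close> agree] rank by simp
  have step: "Xh (Suc j) = Xh j + S j ** PiH j ** Phi j"
      "Q j - A ** S j ** PiH j = Q (Suc j) ** Psi (Suc j)"
      "S (Suc j) = Q (Suc j) + S j ** transpose (Psi (Suc j))"
      "Phi (Suc j) = Psi (Suc j) ** Phi j"
    using run \<open>j < k\<close> unfolding drbcg_run_def is_QR_def by blast+
  have Q: "transpose (Q j) ** Q j = mat 1" "transpose (Q (Suc j)) ** Q (Suc j) = mat 1"
    using drbcg_run_Q_orthonormal[OF run] \<open>j < k\<close> by simp_all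
  have X': "Xh (Suc j) = bcg_X A B X0 (Suc j)"
    by (simp add: bcg_Suc(1) step(1) X PU)
  have "bcg_R A B X0 (Suc j) = Q j ** Phi j - A ** (bcg_P A B X0 j ** bcg_Ups A B X0 j)"
    by (simp add: bcg_Suc(2) R matrix_mul_assoc)
  also have "\<dots> = (Q j - A ** S j ** PiH j) ** Phi j"
    by (simp add: PU matrix_diff_rdistrib matrix_mul_assoc)
  finally have R': "bcg_R A B X0 (Suc j) = Q (Suc j) ** Phi (Suc j)"
    by (simp add: step(2,4) matrix_mul_assoc)
  then have "rank (Q (Suc j) ** Phi (Suc j)) = CARD('m)"
    using rank by (metis le_refl)
  then have Phi': "invertible (Phi (Suc j))"
    by (rule invertible_if_full_rank_mult)
  have P': "bcg_P A B X0 (Suc j) = S (Suc j) ** Phi (Suc j)"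
    unfolding bcg_Suc(3)[of A B X0 j] R' R P step(3,4)
    by (rule bcg_direction_congruence[OF Q Phi])
  show ?thesis
    using X' R' P' Phi' by (simp add: drbcg_agrees_with_bcg_def)
qed

lemma drbcg_agrees:
  fixes A :: "real^'n^'n" and B X0 :: "real^('m::{finite,wellorder})^'n"
    and Xh Q S :: "nat \<Rightarrow> real^('m::{finite,wellorder})^'n"
    and Phi Psi PiH :: "nat \<Rightarrow> real^('m::{finite,wellorder})^('m::{finite,wellorder})"
  assumes spd: "sym_pos_def_mat A"
    and rank: "\<forall>i \<le> k. rank (bcg_R A B X0 i) = CARD('m)"
    and run: "drbcg_run A B X0 k Xh Q S Phi Psi PiH" and "j \<le> k"
  shows "drbcg_agrees_with_bcg A B X0 Xh Q S Phi j"
  using \<open>j \<le> k\<close>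
proof (induction j)
  case 0
  then show ?case using drbcg_agrees_0[OF run] rank by simp
next
  case (Suc j)
  then show ?case using drbcg_agrees_Suc[OF spd _ run] rank by simp
qed

theorem mainTheorem14:
  fixes A :: "real^'n^'n" and B X0 :: "real^('m::{finite,wellorder})^'n"
    and k :: nat
    and Xh Q S :: "nat \<Rightarrow> real^('m::{finite,wellorder})^'n"
    and Phi Psi PiH :: "nat \<Rightarrow> real^('m::{finite,wellorder})^('m::{finite,wellorder})"
  assumes "sym_pos_def_mat A"
    and "k \<ge> 1"
    and "\<forall>j \<le> k. rank (bcg_R A B X0 j) = CARD(('m::{finite,wellorder}))"
    and "drbcg_run A B X0 k Xh Q S Phi Psi PiH"
  shows "(\<forall>j < k. invertible (transpose (S j) ** A ** S j))
     \<and> (\<forall>j \<le> k. invertible (Phi j))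
     \<and> (\<forall>j \<le> k. Xh j = bcg_X A B X0 j
                \<and> bcg_R A B X0 j = Q j ** Phi j
                \<and> bcg_P A B X0 j = S j ** Phi j)
     \<and> (\<forall>j \<in> {1..k}.
          bcg_Ups A B X0 (j - 1) = matrix_inv (Phi (j - 1)) ** PiH (j - 1) ** Phi (j - 1)
        \<and> bcg_Theta A B X0 (j - 1) = transpose (Phi (j - 1)) ** PiH (j - 1) ** Phi (j - 1))"
proof -
  note agree = drbcg_agrees[OF assms(1,3,4)]
  have rank: "\<forall>i \<le> j. rank (bcg_R A B X0 i) = CARD('m)" if "j < k" for j
    using assms(3) that by simp
  note Ups = drbcg_Upsilon_Theta[OF assms(1) rank assms(4) _ agree]
  have "\<forall>j \<in> {1..k}. j - 1 < k" by auto
  then show ?thesis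
    using agree Ups by (auto simp: drbcg_agrees_with_bcg_def)
qed

end
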